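(* Let $\nu\in\mathbb{N}$ and $p\in(0,1)$, and let $G_\nu,g_\nu$ be the c.d.f. and p.d.f. of Student's $t$-distribution with $\nu$ degrees of freedom. For $k\in\mathbb{N}$ let $h_k^{(1)}$ be the unique real solution $h$ of $\int_{-\infty}^{\infty}G_\nu^k(t+h)g_\nu(t)\,dt=p$. Let $q_p$ be the $p$-th quantile of the $\nu$-Fréchet distribution (c.d.f. $x\mapsto\exp(-x^{-\nu})$ for $x>0$), and let $$\gamma_\nu:=\Bigg[\frac{\Gamma(\frac{\nu+1}{2})}{\nu^{1-\frac{\nu}{2}}\sqrt{\pi}\,\Gamma(\frac{\nu}{2})}\Bigg]^{1/\nu}.$$ Then $h_k^{(1)}\sim\gamma_\nu k^{1/\nu}q_p$ as $k\to\infty$.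
   Context: $a_k\sim b_k$ means $a_k/b_k\to1$ as $k\to\infty$. *)

theory Defs
  imports "HOL-Analysis.Analysis"
begin

definition student_pdf :: "nat \<Rightarrow> real \<Rightarrow> real" where
  "student_pdf \<nu> t =
     Gamma ((real \<nu> + 1) / 2) / (sqrt (real \<nu> * pi) * Gamma (real \<nu> / 2))
     * (1 + t\<^sup>2 / real \<nu>) powr (- (real \<nu> + 1) / 2)"

definition student_cdf :: "nat \<Rightarrow> real \<Rightarrow> real" where
  "student_cdf \<nu> x = (LINT t:{..x}|lborel. student_pdf \<nu> t)"

definition h1 :: "nat \<Rightarrow> real \<Rightarrow> nat \<Rightarrow> real" where
  "h1 \<nu> p k = (THE h. (LINT t|lborel. student_cdf \<nu> (t + h) ^ k * student_pdf \<nu> t) = p)"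

definition frechet_cdf :: "nat \<Rightarrow> real \<Rightarrow> real" where
  "frechet_cdf \<nu> x = (if x > 0 then exp (- (x powr (- real \<nu>))) else 0)"

definition frechet_quantile :: "nat \<Rightarrow> real \<Rightarrow> real" where
  "frechet_quantile \<nu> p = (THE x. x > 0 \<and> frechet_cdf \<nu> x = p)"

definition gamma_nu :: "nat \<Rightarrow> real" where
  "gamma_nu \<nu> = (Gamma ((real \<nu> + 1) / 2) /
      (real \<nu> powr (1 - real \<nu> / 2) * sqrt pi * Gamma (real \<nu> / 2))) powr (1 / real \<nu>)"

end

(*
  Write G for the c.d.f. and g for the density of Student's t-distribution with nu degrees of
  freedom, and Phi_k(h) = int G(t + h)^k g(t) dt, so that h_k solves Phi_k(h) = p. Since
  t^(nu+1) g(t) converges, the tail satisfies x^nu (1 - G x) -> gamma_nu^nu. Hence for fixed t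
  and x > 0 the power G(t + x gamma_nu k^(1/nu))^k tends to exp (-x^(-nu)), and by dominated
  convergence Phi_k(x gamma_nu k^(1/nu)) tends to the nu-Frechet c.d.f. at x. As Phi_k is
  increasing, h_k is eventually squeezed between (1 - e) and (1 + e) times gamma_nu k^(1/nu) q_p.
*)
theory Submission
  imports
    Defs
    "HOL-Probability.Distribution_Functions"
    "HOL-Probability.Distributions"
    "HOL-Real_Asymp.Real_Asymp"
begin

lemma tendsto_one_minus_power_exp:
  fixes u :: "nat \<Rightarrow> real"
  assumes lim: "(\<lambda>k. real k * u k) \<longlonglongrightarrow> L" and nonneg: "\<And>k. 0 \<le> u k"
  shows "(\<lambda>k. (1 - u k) ^ k) \<longlonglongrightarrow> exp (- L)"
proof -
  have "(\<lambda>k. real k * u k * inverse (real k)) \<longlonglongrightarrow> 0"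
    using tendsto_mult[OF lim tendsto_inverse_0_at_top[OF filterlim_real_sequentially]] by simp
  moreover have "\<forall>\<^sub>F k in sequentially. real k * u k * inverse (real k) = u k"
    using eventually_gt_at_top[of 0] by eventually_elim simp
  ultimately have "u \<longlonglongrightarrow> 0"
    by (rule Lim_transform_eventually)
  then have small: "\<forall>\<^sub>F k in sequentially. u k < 1 / 2"
    by (rule order_tendstoD(2)) simp
  have lower: "\<forall>\<^sub>F k in sequentially.
      - (real k * u k) - 2 * (real k * u k) * u k \<le> real k * ln (1 - u k)"
    using small
  proof eventually_elim
    case (elim k)
    have "real k * (- u k - 2 * (u k)\<^sup>2) \<le> real k * ln (1 - u k)"
      using ln_one_minus_pos_lower_bound[OF nonneg less_imp_le[OF elim]]
      by (rule mult_left_mono) simp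
    then show ?case
      by (simp add: power2_eq_square algebra_simps)
  qed
  have upper: "\<forall>\<^sub>F k in sequentially. real k * ln (1 - u k) \<le> - (real k * u k)"
    using small
  proof eventually_elim
    case (elim k)
    have "real k * ln (1 - u k) \<le> real k * (- u k)"
      using ln_one_minus_pos_upper_bound[OF nonneg] elim by (intro mult_left_mono) simp_all
    then show ?case
      by simp
  qed
  have "(\<lambda>k. - (real k * u k) - 2 * (real k * u k) * u k) \<longlonglongrightarrow> - L - 2 * L * 0"
    by (intro tendsto_intros lim \<open>u \<longlonglongrightarrow> 0\<close>)
  then have "(\<lambda>k. real k * ln (1 - u k)) \<longlonglongrightarrow> - L"
    using tendsto_sandwich[OF lower upper] tendsto_minus[OF lim] by simp
  then have "(\<lambda>k. exp (real k * ln (1 - u k))) \<longlonglongrightarrow> exp (- L)"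
    by (rule tendsto_exp)
  moreover have "\<forall>\<^sub>F k in sequentially. exp (real k * ln (1 - u k)) = (1 - u k) ^ k"
    using small by eventually_elim (simp add: exp_of_nat_mult)
  ultimately show ?thesis
    by (rule Lim_transform_eventually)
qed

lemma strict_mono_the_preimage:
  fixes f :: "real \<Rightarrow> real"
  assumes mono: "strict_mono f" and cont: "continuous_on UNIV f"
    and bot: "(f \<longlongrightarrow> a) at_bot" and top: "(f \<longlongrightarrow> b) at_top" and y: "a < y" "y < b"
  shows "f (THE x. f x = y) = y"
proof (rule theI')
  obtain l where l: "f l < y"
    using order_tendstoD(2)[OF bot y(1)] by (auto simp: eventually_at_bot_linorder)
  obtain u where u: "y < f u"
    using order_tendstoD(1)[OF top y(2)] by (auto simp: eventually_at_top_linorder)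
  have "l \<le> u"
    using l u strict_monoD[OF mono, of u l] by linarith
  then obtain x where "f x = y"
    using IVT'[of f l y u] l u continuous_on_subset[OF cont] by auto
  moreover have "inj f"
    using mono by (rule strict_mono_imp_inj_on)
  ultimately show "\<exists>!x. f x = y"
    by (auto dest: injD)
qed

lemma tendsto_ratio_of_level_crossings:
  fixes f :: "nat \<Rightarrow> real \<Rightarrow> real" and r s :: "nat \<Rightarrow> real"
  assumes mono: "\<forall>\<^sub>F k in sequentially. mono (f k)"
    and root: "\<forall>\<^sub>F k in sequentially. f k (r k) = p"
    and scale: "\<forall>\<^sub>F k in sequentially. s k > 0"
    and lim: "\<And>x. x > 0 \<Longrightarrow> (\<lambda>k. f k (x * s k)) \<longlonglongrightarrow> G x"
    and q: "q > 0" and below: "\<And>x. 0 < x \<Longrightarrow> x < q \<Longrightarrow> G x < p"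
    and above: "\<And>x. q < x \<Longrightarrow> p < G x"
  shows "(\<lambda>k. r k / (s k * q)) \<longlonglongrightarrow> 1"
proof (rule tendstoI)
  fix e :: real assume "e > 0"
  define \<epsilon> where "\<epsilon> = min (e / 2) (1 / 2)"
  have \<epsilon>: "0 < \<epsilon>" "\<epsilon> < e" "\<epsilon> < 1"
    using \<open>e > 0\<close> by (auto simp: \<epsilon>_def)
  have "\<forall>\<^sub>F k in sequentially. p < f k (q * (1 + \<epsilon>) * s k)"
    using q \<epsilon> by (intro order_tendstoD(1)[OF lim above]) simp_all
  moreover have "\<forall>\<^sub>F k in sequentially. f k (q * (1 - \<epsilon>) * s k) < p"
    using q \<epsilon> by (intro order_tendstoD(2)[OF lim below]) simp_all
  ultimately show "\<forall>\<^sub>F k in sequentially. dist (r k / (s k * q)) 1 < e"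
    using mono root scale
  proof eventually_elim
    case (elim k)
    have "r k < q * (1 + \<epsilon>) * s k"
    proof (rule ccontr)
      assume "\<not> r k < q * (1 + \<epsilon>) * s k"
      then have "q * (1 + \<epsilon>) * s k \<le> r k"
        by simp
      then have "f k (q * (1 + \<epsilon>) * s k) \<le> f k (r k)"
        by (rule monoD[OF \<open>mono (f k)\<close>])
      then show False
        using elim by simp
    qed
    moreover have "q * (1 - \<epsilon>) * s k < r k"
    proof (rule ccontr)
      assume "\<not> q * (1 - \<epsilon>) * s k < r k"
      then have "r k \<le> q * (1 - \<epsilon>) * s k"
        by simp
      then have "f k (r k) \<le> f k (q * (1 - \<epsilon>) * s k)"
        by (rule monoD[OF \<open>mono (f k)\<close>])
      then show False
        using elim by simp
    qed
    ultimately have "\<bar>r k / (s k * q) - 1\<bar> < \<epsilon>"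
      using q \<open>s k > 0\<close> by (simp add: abs_less_iff field_simps)
    then show ?case
      using \<epsilon> by (simp add: dist_real_def)
  qed
qed

lemma powr_integral_Ioi:
  fixes x e :: real
  assumes x: "x > 0" and e: "e < -1"
  shows "set_integrable lborel {x<..} (\<lambda>t. t powr e)"
    and "(LINT t:{x<..}|lborel. t powr e) = - (x powr (e + 1)) / (e + 1)"
proof -
  define V where "V = - (x powr (e + 1)) / (e + 1)"
  have "V \<ge> 0"
    unfolding V_def using e by (intro divide_nonpos_neg) simp_all
  have "(\<integral>\<^sup>+t. ennreal (indicator {x<..} t * t powr e) \<partial>lborel)
      = (\<integral>\<^sup>+t. ennreal (indicator {x..} t * t powr e) \<partial>lborel)"
    by (intro nn_integral_cong_AE eventually_mono[OF AE_lborel_singleton[of x]])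
      (auto simp: indicator_def)
  also have "\<dots> = ennreal V"
    unfolding V_def using has_integral_powr_to_inf[OF e x]
    by (intro nn_integral_has_integral_lebesgue) auto
  finally have nn: "(\<integral>\<^sup>+t. ennreal (indicator {x<..} t * t powr e) \<partial>lborel) = ennreal V" .
  have int: "integrable lborel (\<lambda>t. indicator {x<..} t * t powr e)"
    by (rule integrableI_nonneg) (auto simp: nn intro!: AE_I2)
  then show "set_integrable lborel {x<..} (\<lambda>t. t powr e)"
    by (simp add: set_integrable_def)
  have "ennreal (LINT t:{x<..}|lborel. t powr e) = ennreal V"
    using nn_integral_eq_integral[OF int] nn by (simp add: set_lebesgue_integral_def)
  moreover have "(LINT t:{x<..}|lborel. t powr e) \<ge> 0"
    unfolding set_lebesgue_integral_def
    by (intro integral_nonneg_AE AE_I2) (simp add: indicator_def)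
  ultimately show "(LINT t:{x<..}|lborel. t powr e) = - (x powr (e + 1)) / (e + 1)"
    using \<open>V \<ge> 0\<close> by (simp add: V_def)
qed

lemma set_integral_Ioi_powr_sandwich:
  fixes g :: "real \<Rightarrow> real" and a x C \<delta> :: real
  assumes a: "a > 0" and x: "x > 0" and [measurable]: "g \<in> borel_measurable borel" and "\<delta> \<ge> 0"
    and near: "\<And>t. t > x \<Longrightarrow> (C - \<delta>) * t powr - (a + 1) \<le> g t \<and> g t \<le> (C + \<delta>) * t powr - (a + 1)"
  shows "(C - \<delta>) / a \<le> x powr a * (LINT t:{x<..}|lborel. g t)"
    and "x powr a * (LINT t:{x<..}|lborel. g t) \<le> (C + \<delta>) / a"
proof -
  define w where "w t = t powr - (a + 1)" for t
  have "set_integrable lborel {x<..} w"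
    unfolding w_def using powr_integral_Ioi(1)[of x "- (a + 1)"] a x by simp
  then have cw_int: "set_integrable lborel {x<..} (\<lambda>t. c * w t)" for c
    by simp
  have w_integral: "(LINT t:{x<..}|lborel. w t) = x powr - a / a"
    using powr_integral_Ioi(2)[of x "- (a + 1)"] a x by (simp add: w_def)
  have near_w: "(C - \<delta>) * w t \<le> g t \<and> g t \<le> (C + \<delta>) * w t" if "t \<in> {x<..}" for t
    using near[of t] that by (simp add: w_def)
  have g_bound: "norm (g t) \<le> norm ((\<bar>C\<bar> + \<delta>) * w t)" if "t \<in> {x<..}" for t
  proof -
    have "w t > 0"
      using that x by (simp add: w_def)
    have "- (\<bar>C\<bar> + \<delta>) \<le> C - \<delta>" "C + \<delta> \<le> \<bar>C\<bar> + \<delta>"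
      by auto
    then have "- (\<bar>C\<bar> + \<delta>) * w t \<le> (C - \<delta>) * w t" "(C + \<delta>) * w t \<le> (\<bar>C\<bar> + \<delta>) * w t"
      using \<open>w t > 0\<close> by (meson less_imp_le mult_right_mono)+
    moreover have norm_w: "norm ((\<bar>C\<bar> + \<delta>) * w t) = (\<bar>C\<bar> + \<delta>) * w t"
      using \<open>w t > 0\<close> \<open>\<delta> \<ge> 0\<close> by simp
    ultimately show ?thesis
      unfolding norm_w real_norm_def abs_le_iff using near_w[OF that] by linarith
  qed
  have g_int: "set_integrable lborel {x<..} g"
  proof (rule set_integrable_bound[OF cw_int[of "\<bar>C\<bar> + \<delta>"]])
    show "set_borel_measurable lborel {x<..} g"
      unfolding set_borel_measurable_def by measurable
    show "AE t in lborel. t \<in> {x<..} \<longrightarrow> norm (g t) \<le> norm ((\<bar>C\<bar> + \<delta>) * w t)"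
      by (intro AE_I2 impI g_bound)
  qed
  have lower: "(C - \<delta>) * (x powr - a / a) \<le> (LINT t:{x<..}|lborel. g t)"
    using set_integral_mono[OF cw_int g_int] near_w by (simp add: w_integral)
  have upper: "(LINT t:{x<..}|lborel. g t) \<le> (C + \<delta>) * (x powr - a / a)"
    using set_integral_mono[OF g_int cw_int] near_w by (simp add: w_integral)
  have scale: "x powr a * (c * (x powr - a / a)) = c / a" for c
    using x by (simp add: powr_minus)
  have "0 \<le> x powr a"
    by simp
  show "(C - \<delta>) / a \<le> x powr a * (LINT t:{x<..}|lborel. g t)"
    using mult_left_mono[OF lower \<open>0 \<le> x powr a\<close>] by (simp only: scale)
  show "x powr a * (LINT t:{x<..}|lborel. g t) \<le> (C + \<delta>) / a"
    using mult_left_mono[OF upper \<open>0 \<le> x powr a\<close>] by (simp only: scale)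
qed

lemma tail_integral_asymp_powr:
  fixes g :: "real \<Rightarrow> real" and a C :: real
  assumes a: "a > 0" and g [measurable]: "g \<in> borel_measurable borel"
    and lim: "((\<lambda>t. t powr (a + 1) * g t) \<longlongrightarrow> C) at_top"
  shows "((\<lambda>x. x powr a * (LINT t:{x<..}|lborel. g t)) \<longlongrightarrow> C / a) at_top"
proof (rule tendstoI)
  fix \<epsilon> :: real assume "\<epsilon> > 0"
  define \<delta> where "\<delta> = a * \<epsilon> / 2"
  have \<delta>: "\<delta> > 0" "\<delta> / a < \<epsilon>"
    using a \<open>\<epsilon> > 0\<close> by (simp_all add: \<delta>_def)
  obtain x0 where x0: "\<And>t. t \<ge> x0 \<Longrightarrow> \<bar>t powr (a + 1) * g t - C\<bar> < \<delta>"
    using tendstoD[OF lim \<open>\<delta> > 0\<close>] by (auto simp: eventually_at_top_linorder dist_real_def)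
  have near: "(C - \<delta>) * t powr - (a + 1) \<le> g t \<and> g t \<le> (C + \<delta>) * t powr - (a + 1)"
    if "t > 0" "t \<ge> x0" for t
  proof -
    have "(t powr (a + 1) * g t) * t powr - (a + 1) = g t * (t powr (a + 1) * t powr - (a + 1))"
      by (simp only: mult_ac)
    also have "t powr (a + 1) * t powr - (a + 1) = 1"
      using \<open>t > 0\<close> by (simp flip: powr_add)
    finally have "g t = (t powr (a + 1) * g t) * t powr - (a + 1)"
      by simp
    moreover have "C - \<delta> \<le> t powr (a + 1) * g t" "t powr (a + 1) * g t \<le> C + \<delta>"
      using x0[OF \<open>t \<ge> x0\<close>] by (auto simp: abs_less_iff)
    then have "(C - \<delta>) * t powr - (a + 1) \<le> (t powr (a + 1) * g t) * t powr - (a + 1)"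
      "(t powr (a + 1) * g t) * t powr - (a + 1) \<le> (C + \<delta>) * t powr - (a + 1)"
      by (simp_all add: mult_right_mono)
    ultimately show ?thesis
      by linarith
  qed
  show "\<forall>\<^sub>F x in at_top. dist (x powr a * (LINT t:{x<..}|lborel. g t)) (C / a) < \<epsilon>"
    using eventually_ge_at_top[of x0] eventually_gt_at_top[of 0]
  proof eventually_elim
    case (elim x)
    have "(C - \<delta>) * t powr - (a + 1) \<le> g t \<and> g t \<le> (C + \<delta>) * t powr - (a + 1)" if "t > x" for t
      using that elim by (intro near) simp_all
    from set_integral_Ioi_powr_sandwich[OF a \<open>x > 0\<close> g _ this] \<open>\<delta> > 0\<close>
    have "\<bar>x powr a * (LINT t:{x<..}|lborel. g t) - C / a\<bar> \<le> \<delta> / a"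
      by (simp add: abs_le_iff diff_divide_distrib add_divide_distrib)
    then show ?case
      using \<delta> by (simp add: dist_real_def)
  qed
qed

section \<open>The shifted maximum of independent samples\<close>

text \<open>For i.i.d. \<open>X\<^sub>0, \<dots>, X\<^sub>k\<close> with law \<open>M\<close>, this is the probability that
  \<open>X\<^sub>0 + h\<close> exceeds \<open>X\<^sub>1, \<dots>, X\<^sub>k\<close>.\<close>
definition max_shift_prob :: "real measure \<Rightarrow> nat \<Rightarrow> real \<Rightarrow> real" where
  "max_shift_prob M k h = (\<integral>t. cdf M (t + h) ^ k \<partial>M)"

context real_distribution
begin

lemma borel_measurable_cdf [measurable]: "cdf M \<in> borel_measurable borel"
  by (intro borel_measurable_mono monoI cdf_nondecreasing)

lemma abs_cdf_power_le_1: "\<bar>cdf M x ^ k\<bar> \<le> 1"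
  using cdf_nonneg cdf_bounded_prob by (simp add: abs_le_iff power_le_one)

lemma integrable_cdf_shift_power: "integrable M (\<lambda>t. cdf M (t + h) ^ k)"
  by (rule integrable_const_bound[where B=1])
    (auto intro!: AE_I2 always_eventually simp: abs_cdf_power_le_1)

lemma continuous_on_max_shift_prob:
  assumes no_atoms: "\<And>x. measure M {x} = 0"
  shows "continuous_on UNIV (max_shift_prob M k)"
proof (rule continuous_on_sequentiallyI)
  fix u :: "nat \<Rightarrow> real" and h assume "u \<longlonglongrightarrow> h"
  have "AE t in M. (\<lambda>n. cdf M (t + u n) ^ k) \<longlonglongrightarrow> cdf M (t + h) ^ k"
  proof (rule AE_I2)
    fix t
    have "isCont (cdf M) (t + h)"
      using no_atoms by (simp add: isCont_cdf)
    then show "(\<lambda>n. cdf M (t + u n) ^ k) \<longlonglongrightarrow> cdf M (t + h) ^ k"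
     
        by (intro tendsto_power isCont_tendsto_compose[of _ "cdf M"] tendsto_add tendsto_const
            \<open>u \<longlonglongrightarrow> h\<close>)
  qed
  then show "(\<lambda>n. max_shift_prob M k (u n)) \<longlonglongrightarrow> max_shift_prob M k h"
    unfolding max_shift_prob_def
    by (intro integral_dominated_convergence[where w="\<lambda>_. 1"])
      (auto intro!: AE_I2 always_eventually simp: abs_cdf_power_le_1)
qed

lemma max_shift_prob_strict_mono:
  assumes "strict_mono (cdf M)" and "k \<ge> 1"
  shows "strict_mono (max_shift_prob M k)"
proof (rule strict_monoI)
  fix h h' :: real assume "h < h'"
  have "cdf M (t + h) ^ k < cdf M (t + h') ^ k" for t
    using assms \<open>h < h'\<close> cdf_nonneg by (intro power_strict_mono) (simp_all add: strict_mono_less)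
  then show "max_shift_prob M k h < max_shift_prob M k h'"
    unfolding max_shift_prob_def
    by (intro integral_less_AE_space integrable_cdf_shift_power AE_I2)
      (simp_all add: emeasure_space_1[unfolded space_eq_univ])
qed

lemma max_shift_prob_at_top: "(max_shift_prob M k \<longlongrightarrow> 1) at_top"
proof -
  have shift: "filterlim (\<lambda>h. t + h) at_top at_top" for t :: real
    by real_asymp
  have "AE t in M. ((\<lambda>h. cdf M (t + h) ^ k) \<longlongrightarrow> 1 ^ k) at_top"
    by (intro AE_I2 tendsto_power filterlim_compose[OF cdf_lim_at_top_prob shift])
  then have "((\<lambda>h. \<integral>t. cdf M (t + h) ^ k \<partial>M) \<longlongrightarrow> \<integral>t. 1 \<partial>M) at_top"
    by (intro integral_dominated_convergence_at_top[where w="\<lambda>_. 1"])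
      (auto intro!: AE_I2 always_eventually simp: abs_cdf_power_le_1)
  then show ?thesis
    by (simp add: max_shift_prob_def[abs_def] prob_space[unfolded space_eq_univ])
qed

lemma max_shift_prob_at_bot:
  assumes "k \<ge> 1"
  shows "(max_shift_prob M k \<longlongrightarrow> 0) at_bot"
proof -
  have shift: "filterlim (\<lambda>h. t + - h) at_bot at_top" for t :: real
    by real_asymp
  have "AE t in M. ((\<lambda>h. cdf M (t + - h)) \<longlongrightarrow> 0) at_top"
    by (intro AE_I2 filterlim_compose[OF cdf_lim_at_bot shift])
  then have "AE t in M. ((\<lambda>h. cdf M (t + - h) ^ k) \<longlongrightarrow> 0) at_top"
    using assms by simp
  then have "((\<lambda>h. \<integral>t. cdf M (t + - h) ^ k \<partial>M) \<longlongrightarrow> \<integral>t. 0 \<partial>M) at_top"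
    by (intro integral_dominated_convergence_at_top[where w="\<lambda>_. 1"])
      (auto intro!: AE_I2 always_eventually simp: abs_cdf_power_le_1)
  then show ?thesis
    by (simp add: max_shift_prob_def[abs_def] filterlim_at_bot_mirror)
qed

lemma cdf_power_tendsto_exp:
  assumes a: "a > 0" and c: "c > 0"
    and tail: "((\<lambda>x. x powr a * (1 - cdf M x)) \<longlongrightarrow> A) at_top"
  shows "(\<lambda>k. cdf M (t + c * real k powr (1 / a)) ^ k) \<longlonglongrightarrow> exp (- (A / c powr a))"
proof -
  define y where "y k = t + c * real k powr (1 / a)" for k :: nat
  have y: "filterlim y at_top sequentially"
    unfolding y_def using a c by real_asymp
  have "(\<lambda>k. y k powr a * (1 - cdf M (y k)) * (real k / y k powr a)) \<longlonglongrightarrow> A * (1 / c powr a)"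
  proof (intro tendsto_mult)
    show "(\<lambda>k. y k powr a * (1 - cdf M (y k))) \<longlonglongrightarrow> A"
      using filterlim_compose[OF tail y] by (simp add: o_def)
    show "(\<lambda>k. real k / y k powr a) \<longlonglongrightarrow> 1 / c powr a"
      unfolding y_def using a c by real_asymp (simp add: inverse_eq_divide)
  qed
  moreover have "\<forall>\<^sub>F k in sequentially. y k > 0"
    using y unfolding filterlim_at_top_dense by blast
  then have "\<forall>\<^sub>F k in sequentially. y k powr a * (1 - cdf M (y k)) * (real k / y k powr a)
      = real k * (1 - cdf M (y k))"
    by eventually_elim simp
  ultimately have "(\<lambda>k. real k * (1 - cdf M (y k))) \<longlonglongrightarrow> A * (1 / c powr a)"
    by (rule Lim_transform_eventually)
  from tendsto_one_minus_power_exp[OF this] show ?thesis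
    by (simp add: y_def cdf_bounded_prob)
qed

lemma max_shift_prob_scaled_tendsto:
  assumes a: "a > 0" and c: "c > 0"
    and tail: "((\<lambda>x. x powr a * (1 - cdf M x)) \<longlongrightarrow> A) at_top"
  shows "(\<lambda>k. max_shift_prob M k (c * real k powr (1 / a))) \<longlonglongrightarrow> exp (- (A / c powr a))"
proof -
  have "(\<lambda>k. \<integral>t. cdf M (t + c * real k powr (1 / a)) ^ k \<partial>M) \<longlonglongrightarrow> \<integral>t. exp (- (A / c powr a)) \<partial>M"
    using cdf_power_tendsto_exp[OF assms]
    by (intro integral_dominated_convergence[where w="\<lambda>_. 1"] AE_I2)
      (auto intro!: AE_I2 always_eventually simp: abs_cdf_power_le_1)
  then show ?thesis
    by (simp add: max_shift_prob_def prob_space[unfolded space_eq_univ])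
qed

end

lemma measure_density_lborel_eq_set_integral:
  fixes g :: "real \<Rightarrow> real"
  assumes [measurable]: "g \<in> borel_measurable borel" "A \<in> sets borel" and nonneg: "\<And>t. g t \<ge> 0"
  shows "measure (density lborel g) A = (LINT t:A|lborel. g t)"
proof -
  have "measure (density lborel g) A = integral\<^sup>L (density lborel g) (indicator A)"
    by simp
  also have "\<dots> = (\<integral>t. g t *\<^sub>R indicator A t \<partial>lborel)"
    using nonneg by (intro integral_density) simp_all
  finally show ?thesis
    by (simp add: set_lebesgue_integral_def mult.commute)
qed

lemma measure_density_lborel_singleton:
  fixes g :: "real \<Rightarrow> real"
  assumes [measurable]: "g \<in> borel_measurable borel"
  shows "measure (density lborel g) {x} = 0"
proof -
  have "AE t in lborel. ennreal (g t) * indicator {x} t = 0"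
    using AE_lborel_singleton[of x] by eventually_elim simp
  then have "emeasure (density lborel g) {x} = 0"
    by (simp add: emeasure_density nn_integral_zero')
  then show ?thesis
    by (simp add: measure_def)
qed

lemma strict_mono_cdf_density:
  fixes g :: "real \<Rightarrow> real"
  assumes "real_distribution (density lborel g)"
    and [measurable]: "g \<in> borel_measurable borel" and pos: "\<And>t. g t > 0"
  shows "strict_mono (cdf (density lborel g))"
proof (rule strict_monoI)
  interpret real_distribution "density lborel g"
    by fact
  fix x y :: real assume "x < y"
  have "emeasure (density lborel g) {x<..y} \<noteq> 0"
  proof
    assume "emeasure (density lborel g) {x<..y} = 0"
    then have "AE t in lborel. ennreal (g t) * indicator {x<..y} t = 0"
      by (simp add: emeasure_density nn_integral_0_iff_AE)
    then have "AE t in lborel. t \<notin> {x<..y}"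
    proof eventually_elim
      case (elim t)
      then show ?case
        using pos[of t] by (auto simp: indicator_def ennreal_eq_0_iff split: if_splits)
    qed
    then have "emeasure lborel {x<..y} = 0"
      by (subst (asm) AE_iff_measurable[of "{x<..y}"]) auto
    then show False
      using \<open>x < y\<close> by simp
  qed
  then have "measure (density lborel g) {x<..y} \<noteq> 0"
    by (simp add: emeasure_eq_measure)
  then have "measure (density lborel g) {x<..y} > 0"
    using measure_nonneg[of "density lborel g" "{x<..y}"] by linarith
  then show "cdf (density lborel g) x < cdf (density lborel g) y"
    using cdf_diff_eq[OF \<open>x < y\<close>] by simp
qed

section \<open>Student's \<open>t\<close>-distribution\<close>

lemma nn_integral_Gamma_kernel:
  fixes a b :: real
  assumes a: "a > 0" and b: "b > 0"
  shows "(\<integral>\<^sup>+y. ennreal (indicator {0..} y * y powr (a - 1) * exp (- (b * y))) \<partial>lborel)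
    = ennreal (Gamma a / b powr a)"
    (is "?I = _")
proof -
  have kernel: "ennreal (indicator {0..} (b * y) * (b * y) powr (a - 1) / exp (b * y))
      = ennreal (b powr (a - 1)) * ennreal (indicator {0..} y * y powr (a - 1) * exp (- (b * y)))"
    for y
    using b by (auto simp: indicator_def powr_mult exp_minus field_simps zero_le_mult_iff
        simp flip: ennreal_mult')
  have "ennreal (Gamma a) = (\<integral>\<^sup>+u. ennreal (indicator {0..} u * u powr (a - 1) / exp u) \<partial>lborel)"
    using Gamma_conv_nn_integral_real[OF a] by simp
  also have "\<dots> = ennreal b
      * (\<integral>\<^sup>+y. ennreal (indicator {0..} (b * y) * (b * y) powr (a - 1) / exp (b * y)) \<partial>lborel)"
    using b nn_integral_real_affine[of "\<lambda>u. ennreal (indicator {0..} u * u powr (a - 1) / exp u)"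
        b 0]
    by simp
  also have "\<dots> = ennreal b * ennreal (b powr (a - 1)) * ?I"
    by (simp add: kernel nn_integral_cmult mult.assoc)
  also have "ennreal b * ennreal (b powr (a - 1)) = ennreal (b powr a)"
    using b by (simp add: powr_mult_base flip: ennreal_mult')
  finally have "ennreal (b powr a) * ?I = ennreal (b powr a) * ennreal (Gamma a / b powr a)"
    using b by (simp flip: ennreal_mult')
  then show ?thesis
    using b by (simp add: ennreal_mult_cancel_left)
qed

lemma nn_integral_exp_neg_mult_square:
  fixes c :: real
  assumes c: "c > 0"
  shows "(\<integral>\<^sup>+t. ennreal (exp (- (c * t\<^sup>2))) \<partial>lborel) = ennreal (sqrt (pi / c))"
proof -
  define \<sigma> where "\<sigma> = sqrt (1 / (2 * c))"
  have \<sigma>: "\<sigma> > 0" "\<sigma>\<^sup>2 = 1 / (2 * c)"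
    using c by (simp_all add: \<sigma>_def)
  have "exp (- (c * t\<^sup>2)) = sqrt (pi / c) * normal_density 0 \<sigma> t" for t
  proof -
    have "2 * pi * \<sigma>\<^sup>2 = pi / c" and "- (t - 0)\<^sup>2 / (2 * \<sigma>\<^sup>2) = - (c * t\<^sup>2)"
      using c by (simp_all add: \<sigma>(2))
    then show ?thesis
      using c by (simp add: normal_density_def)
  qed
  then have "(\<integral>\<^sup>+t. ennreal (exp (- (c * t\<^sup>2))) \<partial>lborel)
      = ennreal (sqrt (pi / c)) * (\<integral>\<^sup>+t. ennreal (normal_density 0 \<sigma> t) \<partial>lborel)"
    using c by (simp add: ennreal_mult nn_integral_cmult)
  also have "(\<integral>\<^sup>+t. ennreal (normal_density 0 \<sigma> t) \<partial>lborel) = 1"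
    using prob_space.emeasure_space_1[OF prob_space_normal_density[OF \<sigma>(1)]]
    by (simp add: emeasure_density)
  finally show ?thesis
    by simp
qed

definition student_const :: "nat \<Rightarrow> real" where
  "student_const \<nu> = Gamma ((real \<nu> + 1) / 2) / (sqrt (real \<nu> * pi) * Gamma (real \<nu> / 2))"

lemma student_const_pos: "\<nu> \<ge> 1 \<Longrightarrow> student_const \<nu> > 0"
  unfolding student_const_def by (intro divide_pos_pos mult_pos_pos Gamma_real_pos) auto

lemma student_pdf_eq:
  "student_pdf \<nu> t = student_const \<nu> * (1 + t\<^sup>2 / real \<nu>) powr (- (real \<nu> + 1) / 2)"
  unfolding student_pdf_def student_const_def by (rule refl)

lemma student_pdf_eq_divide:
  "student_pdf \<nu> t = student_const \<nu> / (1 + t\<^sup>2 / real \<nu>) powr ((real \<nu> + 1) / 2)"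
  unfolding student_pdf_eq minus_divide_left[symmetric] powr_minus_divide by simp

lemma student_pdf_pos:
  assumes "\<nu> \<ge> 1"
  shows "student_pdf \<nu> t > 0"
proof -
  have "1 + t\<^sup>2 / real \<nu> > 0"
    by (simp add: add_pos_nonneg)
  then show ?thesis
    using student_const_pos[OF assms] by (simp add: student_pdf_eq)
qed

lemma student_pdf_nonneg: "\<nu> \<ge> 1 \<Longrightarrow> student_pdf \<nu> t \<ge> 0"
  by (rule less_imp_le[OF student_pdf_pos])

lemma Gamma_student_neq_0:
  assumes "\<nu> \<ge> 1"
  shows "Gamma (real \<nu> / 2) \<noteq> 0" and "Gamma ((1 + real \<nu>) / 2) \<noteq> 0"
    and "Gamma ((real \<nu> + 1) / 2) \<noteq> 0"
proof -
  have "0 < Gamma (real \<nu> / 2)"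
    by (rule Gamma_real_pos) (use assms in simp)
  moreover have "0 < Gamma ((real \<nu> + 1) / 2)"
    by (rule Gamma_real_pos) simp
  ultimately show "Gamma (real \<nu> / 2) \<noteq> 0" and "Gamma ((1 + real \<nu>) / 2) \<noteq> 0"
    and "Gamma ((real \<nu> + 1) / 2) \<noteq> 0"
    by (metis add.commute less_irrefl)+
qed

lemma borel_measurable_student_pdf [measurable]: "student_pdf \<nu> \<in> borel_measurable borel"
  unfolding student_pdf_eq[abs_def] by measurable

text \<open>Student's \<open>t\<close>-distribution is a scale mixture of centred normals with
  Gamma-distributed precision.\<close>
lemma student_pdf_Gamma_mixture:
  assumes "\<nu> \<ge> 1"
  shows "ennreal (student_pdf \<nu> t) = (\<integral>\<^sup>+y. ennreal (student_const \<nu> / Gamma ((real \<nu> + 1) / 2)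
      * (indicator {0..} y * y powr ((real \<nu> - 1) / 2) * exp (- ((1 + t\<^sup>2 / real \<nu>) * y))))
    \<partial>lborel)"
proof -
  define a where "a = (real \<nu> + 1) / 2"
  define b where "b = 1 + t\<^sup>2 / real \<nu>"
  define C where "C = student_const \<nu> / Gamma a"
  have "a > 0" "b > 0"
    by (simp_all add: a_def b_def add_pos_nonneg)
  have C: "C \<ge> 0"
    using student_const_pos[OF assms] Gamma_real_pos[OF \<open>a > 0\<close>] by (simp add: C_def)
  have "(\<integral>\<^sup>+y. ennreal (C * (indicator {0..} y * y powr (a - 1) * exp (- (b * y)))) \<partial>lborel)
      = (\<integral>\<^sup>+y. ennreal C * ennreal (indicator {0..} y * y powr (a - 1) * exp (- (b * y))) \<partial>lborel)"
    by (intro nn_integral_cong ennreal_mult' C)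
  also have "\<dots> = ennreal C * ennreal (Gamma a / b powr a)"
    using \<open>a > 0\<close> \<open>b > 0\<close> by (simp add: nn_integral_cmult nn_integral_Gamma_kernel)
  also have "\<dots> = ennreal (C * (Gamma a / b powr a))"
    by (rule ennreal_mult'[symmetric, OF C])
  also have "C * (Gamma a / b powr a) = student_pdf \<nu> t"
  proof -
    have "student_pdf \<nu> t = student_const \<nu> / b powr a"
      by (simp add: student_pdf_eq_divide a_def b_def)
    moreover have "Gamma a \<noteq> 0" "b powr a \<noteq> 0"
      using Gamma_real_pos[OF \<open>a > 0\<close>] \<open>b > 0\<close> by simp_all
    ultimately show ?thesis
      by (simp add: C_def field_simps)
  qed
  moreover have "a - 1 = (real \<nu> - 1) / 2"
    by (simp add: a_def field_simps)
  ultimately show ?thesis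
    by (simp add: b_def C_def a_def)
qed

lemma nn_integral_student_mixture_over_t:
  assumes "\<nu> \<ge> 1"
  shows "(\<integral>\<^sup>+t. ennreal (indicator {0..} y * y powr ((real \<nu> - 1) / 2)
      * exp (- ((1 + t\<^sup>2 / real \<nu>) * y))) \<partial>lborel)
    = ennreal (sqrt (pi * real \<nu>) * (indicator {0..} y * y powr (real \<nu> / 2 - 1) * exp (- y)))"
    (is "?I = _")
proof (cases "y > 0")
  case True
  have "exp (- ((1 + t\<^sup>2 / real \<nu>) * y)) = exp (- y) * exp (- (y / real \<nu> * t\<^sup>2))" for t
    by (simp add: algebra_simps flip: exp_add)
  then have "?I = ennreal (y powr ((real \<nu> - 1) / 2) * exp (- y))
      * ennreal (sqrt (pi / (y / real \<nu>)))"
    using True assms nn_integral_exp_neg_mult_square[of "y / real \<nu>"]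
    by (simp add: mult.assoc ennreal_mult' nn_integral_cmult)
  also have "\<dots> = ennreal (sqrt (pi * real \<nu>) * (y powr (real \<nu> / 2 - 1) * exp (- y)))"
  proof -
    have "sqrt (pi / (y / real \<nu>)) = sqrt (pi * real \<nu>) / y powr (1 / 2)"
      using True by (simp add: real_sqrt_divide powr_half_sqrt)
    moreover have "y powr ((real \<nu> - 1) / 2) / y powr (1 / 2) = y powr (real \<nu> / 2 - 1)"
      by (simp add: diff_divide_distrib add_divide_distrib flip: powr_diff)
    ultimately show ?thesis
      using True by (simp add: field_simps flip: ennreal_mult')
  qed
  finally show ?thesis
    using True by simp
next
  case False
  then consider "y < 0" | "y = 0"
    by linarith
  then show ?thesis
    by cases (simp_all add: indicator_def)
qed

lemma nn_integral_student_pdf: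
  assumes \<nu>: "\<nu> \<ge> 1"
  shows "(\<integral>\<^sup>+t. ennreal (student_pdf \<nu> t) \<partial>lborel) = 1"
proof -
  define C where "C = student_const \<nu> / Gamma ((real \<nu> + 1) / 2)"
  have C: "C > 0"
    using student_const_pos[OF \<nu>] by (simp add: C_def Gamma_real_pos)
  define F where "F t y = indicator {0..} y * y powr ((real \<nu> - 1) / 2)
    * exp (- ((1 + t\<^sup>2 / real \<nu>) * y))" for t y :: real
  have F_nonneg: "F t y \<ge> 0" for t y
    by (simp add: F_def)
  have "(\<integral>\<^sup>+t. ennreal (student_pdf \<nu> t) \<partial>lborel)
      = (\<integral>\<^sup>+t. \<integral>\<^sup>+y. ennreal C * ennreal (F t y) \<partial>lborel \<partial>lborel)"
    using C F_nonneg by (simp add: student_pdf_Gamma_mixture[OF \<nu>] C_def F_def flip: ennreal_mult')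
  also have "\<dots> = (\<integral>\<^sup>+y. \<integral>\<^sup>+t. ennreal C * ennreal (F t y) \<partial>lborel \<partial>lborel)"
    by (rule lborel_pair.Fubini') (simp add: F_def)
  also have "\<dots> = (\<integral>\<^sup>+y. ennreal C * ennreal (sqrt (pi * real \<nu>)
      * (indicator {0..} y * y powr (real \<nu> / 2 - 1) * exp (- y))) \<partial>lborel)"
    by (simp add: nn_integral_cmult F_def nn_integral_student_mixture_over_t[OF \<nu>])
  also have "\<dots> = (\<integral>\<^sup>+y. ennreal (C * sqrt (pi * real \<nu>))
      * ennreal (indicator {0..} y * y powr (real \<nu> / 2 - 1) * exp (- y)) \<partial>lborel)"
    using C by (intro nn_integral_cong) (simp add: mult.assoc flip: ennreal_mult')
  also have "\<dots> = ennreal (C * sqrt (pi * real \<nu>))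
      * (\<integral>\<^sup>+y. ennreal (indicator {0..} y * y powr (real \<nu> / 2 - 1) * exp (- y)) \<partial>lborel)"
    by (rule nn_integral_cmult) simp
  also have "\<dots> = ennreal (C * sqrt (pi * real \<nu>) * Gamma (real \<nu> / 2))"
    using C \<nu> nn_integral_Gamma_kernel[of "real \<nu> / 2" 1] by (simp flip: ennreal_mult')
  also have "C * sqrt (pi * real \<nu>) * Gamma (real \<nu> / 2) = 1"
    using \<nu> Gamma_student_neq_0[OF \<nu>]
    by (simp add: C_def student_const_def real_sqrt_mult field_simps)
  finally show ?thesis
    by simp
qed

abbreviation student_distr :: "nat \<Rightarrow> real measure" where
  "student_distr \<nu> \<equiv> density lborel (student_pdf \<nu>)"

lemma real_distribution_student:
  assumes "\<nu> \<ge> 1"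
  shows "real_distribution (student_distr \<nu>)"
proof -
  have "prob_space (student_distr \<nu>)"
    by (rule prob_spaceI) (simp add: emeasure_density nn_integral_student_pdf[OF assms])
  then show ?thesis
    by (simp add: real_distribution_def real_distribution_axioms_def)
qed

lemma student_cdf_eq_cdf:
  assumes "\<nu> \<ge> 1"
  shows "student_cdf \<nu> x = cdf (student_distr \<nu>) x"
  unfolding student_cdf_def cdf_def
  by (rule measure_density_lborel_eq_set_integral[symmetric])
    (simp_all add: student_pdf_nonneg[OF assms])

lemma one_minus_student_cdf:
  assumes "\<nu> \<ge> 1"
  shows "1 - cdf (student_distr \<nu>) x = (LINT t:{x<..}|lborel. student_pdf \<nu> t)"
proof -
  interpret real_distribution "student_distr \<nu>"
    using assms by (rule real_distribution_student)
  have "1 - cdf (student_distr \<nu>) x = measure (student_distr \<nu>) (UNIV - {..x})"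
    using prob_compl[of "{..x}"] by (simp add: cdf_def)
  also have "UNIV - {..x} = {x<..}"
    by auto
  also have "measure (student_distr \<nu>) {x<..} = (LINT t:{x<..}|lborel. student_pdf \<nu> t)"
    by (rule measure_density_lborel_eq_set_integral) (simp_all add: student_pdf_nonneg[OF assms])
  finally show ?thesis .
qed

lemma student_pdf_tail_limit:
  assumes "\<nu> \<ge> 1"
  shows "((\<lambda>t. t powr (real \<nu> + 1) * student_pdf \<nu> t)
    \<longlongrightarrow> student_const \<nu> * real \<nu> powr ((real \<nu> + 1) / 2)) at_top"
proof -
  define e where "e = (real \<nu> + 1) / 2"
  have "((\<lambda>t. 1 / (inverse (t\<^sup>2) + 1 / real \<nu>)) \<longlongrightarrow> real \<nu>) at_top"
    using assms by real_asymp
  then have "((\<lambda>t. student_const \<nu> * (1 / (inverse (t\<^sup>2) + 1 / real \<nu>)) powr e)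
      \<longlongrightarrow> student_const \<nu> * real \<nu> powr e) at_top"
    using assms by (intro tendsto_mult tendsto_const tendsto_powr) simp_all
  moreover have "\<forall>\<^sub>F t in at_top. student_const \<nu> * (1 / (inverse (t\<^sup>2) + 1 / real \<nu>)) powr e
      = t powr (real \<nu> + 1) * student_pdf \<nu> t"
    using eventually_gt_at_top[of 0]
  proof eventually_elim
    case (elim t)
    have "1 + t\<^sup>2 / real \<nu> > 0"
      by (simp add: add_pos_nonneg)
    have "1 / (inverse (t\<^sup>2) + 1 / real \<nu>) = t\<^sup>2 / (1 + t\<^sup>2 / real \<nu>)"
      using elim assms by (simp add: field_simps)
    moreover have "(t\<^sup>2) powr e = t powr (real \<nu> + 1)"
    proof -
      have "(t\<^sup>2) powr e = t powr (2 * e)"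
        using elim by (simp add: powr_powr flip: powr_numeral)
      also have "2 * e = real \<nu> + 1"
        by (simp add: e_def)
      finally show ?thesis .
    qed
    ultimately show ?case
      using \<open>1 + t\<^sup>2 / real \<nu> > 0\<close>
      by (simp add: powr_divide student_pdf_eq_divide e_def)
  qed
  ultimately show ?thesis
    by (simp add: Lim_transform_eventually e_def)
qed

lemma gamma_nu_pos: "\<nu> \<ge> 1 \<Longrightarrow> gamma_nu \<nu> > 0"
  unfolding gamma_nu_def using Gamma_student_neq_0 by simp

lemma gamma_nu_powr_nu:
  assumes \<nu>: "\<nu> \<ge> 1"
  shows "gamma_nu \<nu> powr real \<nu> = student_const \<nu> * real \<nu> powr ((real \<nu> + 1) / 2) / real \<nu>"
proof -
  define Q where
    "Q = Gamma ((real \<nu> + 1) / 2) / (real \<nu> powr (1 - real \<nu> / 2) * sqrt pi * Gamma (real \<nu> / 2))"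
  have "Q > 0"
    using \<nu> by (simp add: Q_def Gamma_real_pos)
  have "gamma_nu \<nu> powr real \<nu> = Q"
    using \<open>Q > 0\<close> \<nu> by (simp add: gamma_nu_def Q_def[symmetric] powr_powr)
  also have "Q = student_const \<nu> * real \<nu> powr ((real \<nu> + 1) / 2) / real \<nu>"
  proof -
    have "(real \<nu> + 1) / 2 + (1 - real \<nu> / 2) = 1 + 1 / 2"
      by (simp add: field_simps)
    then have "real \<nu> powr ((real \<nu> + 1) / 2) * real \<nu> powr (1 - real \<nu> / 2)
        = real \<nu> powr (1 + 1 / 2)"
      by (simp only: powr_add[symmetric])
    also have "\<dots> = real \<nu> * sqrt (real \<nu>)"
      using \<nu> by (subst powr_add) (simp add: powr_half_sqrt)
    finally have "real \<nu> powr ((real \<nu> + 1) / 2)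
        = real \<nu> * sqrt (real \<nu>) / real \<nu> powr (1 - real \<nu> / 2)"
      using \<nu> by (simp add: field_simps)
    then show ?thesis
      using \<nu> Gamma_student_neq_0[OF \<nu>]
      by (simp add: Q_def student_const_def real_sqrt_mult field_simps)
  qed
  finally show ?thesis .
qed

lemma student_cdf_tail:
  assumes "\<nu> \<ge> 1"
  shows "((\<lambda>x. x powr real \<nu> * (1 - cdf (student_distr \<nu>) x)) \<longlongrightarrow> gamma_nu \<nu> powr real \<nu>) at_top"
  using tail_integral_asymp_powr[OF _ borel_measurable_student_pdf student_pdf_tail_limit[OF assms]]
    assms
  by (simp add: one_minus_student_cdf gamma_nu_powr_nu)

lemma frechet_quantile_eq:
  assumes "\<nu> \<ge> 1" and "0 < p" and "p < 1"
  shows "frechet_quantile \<nu> p = (- ln p) powr (- 1 / real \<nu>)"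
  unfolding frechet_quantile_def frechet_cdf_def
proof (rule the_equality)
  have "- ln p > 0"
    using assms by simp
  then show "(- ln p) powr (- 1 / real \<nu>) > 0 \<and> (if (- ln p) powr (- 1 / real \<nu>) > 0
      then exp (- (((- ln p) powr (- 1 / real \<nu>)) powr - real \<nu>)) else 0) = p"
    using assms by (simp add: powr_powr)
next
  fix x assume "x > 0 \<and> (if x > 0 then exp (- (x powr - real \<nu>)) else 0) = p"
  then have "x > 0" and "exp (- (x powr - real \<nu>)) = p"
    by (auto split: if_splits)
  then have "- ln p = x powr - real \<nu>"
    by auto
  then show "x = (- ln p) powr (- 1 / real \<nu>)"
    using \<open>x > 0\<close> assms by (simp add: powr_powr)
qed

lemma frechet_quantile_crossing:
  assumes "\<nu> \<ge> 1" and "0 < p" and "p < 1"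
  shows "frechet_quantile \<nu> p > 0"
    and "0 < x \<Longrightarrow> x < frechet_quantile \<nu> p \<Longrightarrow> exp (- (x powr - real \<nu>)) < p"
    and "frechet_quantile \<nu> p < x \<Longrightarrow> p < exp (- (x powr - real \<nu>))"
proof -
  have "- ln p > 0"
    using assms by simp
  then have q: "frechet_quantile \<nu> p > 0" "exp (- (frechet_quantile \<nu> p powr - real \<nu>)) = p"
    using assms by (simp_all add: frechet_quantile_eq powr_powr)
  then show "frechet_quantile \<nu> p > 0"
    by simp
  show "exp (- (x powr - real \<nu>)) < p" if "0 < x" "x < frechet_quantile \<nu> p"
  proof -
    have "frechet_quantile \<nu> p powr - real \<nu> < x powr - real \<nu>"
      using that assms(1) by (intro powr_less_mono2_neg) simp_all
    then show ?thesis
      using q(2) by (metis exp_less_cancel_iff neg_less_iff_less)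
  qed
  show "p < exp (- (x powr - real \<nu>))" if "frechet_quantile \<nu> p < x"
  proof -
    have "x powr - real \<nu> < frechet_quantile \<nu> p powr - real \<nu>"
      using that q(1) assms(1) by (intro powr_less_mono2_neg) simp_all
    then show ?thesis
      using q(2) by (metis exp_less_cancel_iff neg_less_iff_less)
  qed
qed

lemma h1_eq_the_max_shift_prob:
  assumes "\<nu> \<ge> 1"
  shows "h1 \<nu> p k = (THE h. max_shift_prob (student_distr \<nu>) k h = p)"
proof -
  interpret real_distribution "student_distr \<nu>"
    using assms by (rule real_distribution_student)
  have "max_shift_prob (student_distr \<nu>) k h
      = (LINT t|lborel. student_cdf \<nu> (t + h) ^ k * student_pdf \<nu> t)" for h
  proof -
    have [measurable]: "cdf (student_distr \<nu>) \<in> borel_measurable borel"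
      by (rule borel_measurable_cdf)
    have "max_shift_prob (student_distr \<nu>) k h
        = (\<integral>t. student_pdf \<nu> t *\<^sub>R cdf (student_distr \<nu>) (t + h) ^ k \<partial>lborel)"
      unfolding max_shift_prob_def
      by (rule integral_density) (simp_all add: student_pdf_nonneg[OF assms])
    then show ?thesis
      using assms by (simp add: student_cdf_eq_cdf mult.commute)
  qed
  then show ?thesis
    by (simp add: h1_def)
qed

lemma strict_mono_cdf_student:
  assumes "\<nu> \<ge> 1"
  shows "strict_mono (cdf (student_distr \<nu>))"
  using real_distribution_student[OF assms] borel_measurable_student_pdf student_pdf_pos[OF assms]
  by (rule strict_mono_cdf_density)

lemma max_shift_prob_student_root:
  assumes "\<nu> \<ge> 1" and "k \<ge> 1" and "0 < p" and "p < 1"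
  shows "max_shift_prob (student_distr \<nu>) k (h1 \<nu> p k) = p"
proof -
  interpret real_distribution "student_distr \<nu>"
    using assms(1) by (rule real_distribution_student)
  show ?thesis
    unfolding h1_eq_the_max_shift_prob[OF assms(1)]
    using assms strict_mono_cdf_student
      continuous_on_max_shift_prob[OF measure_density_lborel_singleton]
      max_shift_prob_at_bot max_shift_prob_at_top
    by (intro strict_mono_the_preimage max_shift_prob_strict_mono) simp_all
qed

lemma mono_max_shift_prob_student:
  assumes "\<nu> \<ge> 1" and "k \<ge> 1"
  shows "mono (max_shift_prob (student_distr \<nu>) k)"
proof -
  interpret real_distribution "student_distr \<nu>"
    using assms(1) by (rule real_distribution_student)
  show ?thesis
    using assms strict_mono_cdf_student by (intro strict_mono_mono max_shift_prob_strict_mono)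
qed

lemma max_shift_prob_student_scaled_tendsto:
  assumes "\<nu> \<ge> 1" and "x > 0"
  shows "(\<lambda>k. max_shift_prob (student_distr \<nu>) k (x * (gamma_nu \<nu> * real k powr (1 / real \<nu>))))
    \<longlonglongrightarrow> exp (- (x powr - real \<nu>))"
proof -
  interpret real_distribution "student_distr \<nu>"
    using assms(1) by (rule real_distribution_student)
  have "gamma_nu \<nu> powr real \<nu> / (x * gamma_nu \<nu>) powr real \<nu> = x powr - real \<nu>"
    using assms gamma_nu_pos[OF assms(1)] by (simp add: powr_mult powr_minus divide_inverse)
  then show ?thesis
    using max_shift_prob_scaled_tendsto[of "real \<nu>" "x * gamma_nu \<nu>",
        OF _ _ student_cdf_tail[OF assms(1)]]
      assms gamma_nu_pos[OF assms(1)] by (simp add: mult.assoc)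
qed

theorem theorem4:
  fixes \<nu> :: nat and p :: real
  assumes "\<nu> \<ge> 1" and "0 < p" and "p < 1"
  shows "(\<lambda>k. h1 \<nu> p k / (gamma_nu \<nu> * real k powr (1 / real \<nu>) * frechet_quantile \<nu> p))
           \<longlonglongrightarrow> 1"
proof (rule tendsto_ratio_of_level_crossings[where f = "max_shift_prob (student_distr \<nu>)"
      and s = "\<lambda>k. gamma_nu \<nu> * real k powr (1 / real \<nu>)" and G = "\<lambda>x. exp (- (x powr - real \<nu>))"])
  show "\<forall>\<^sub>F k in sequentially. mono (max_shift_prob (student_distr \<nu>) k)"
    using eventually_ge_at_top[of 1]
    by eventually_elim (rule mono_max_shift_prob_student[OF assms(1)])
  show "\<forall>\<^sub>F k in sequentially. max_shift_prob (student_distr \<nu>) k (h1 \<nu> p k) = p"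
    using eventually_ge_at_top[of 1]
    by eventually_elim (rule max_shift_prob_student_root[OF assms(1) _ assms(2,3)])
  show "\<forall>\<^sub>F k in sequentially. gamma_nu \<nu> * real k powr (1 / real \<nu>) > 0"
    using eventually_gt_at_top[of 0] by eventually_elim (simp add: gamma_nu_pos[OF assms(1)])
  show "(\<lambda>k. max_shift_prob (student_distr \<nu>) k (x * (gamma_nu \<nu> * real k powr (1 / real \<nu>))))
      \<longlonglongrightarrow> exp (- (x powr - real \<nu>))" if "x > 0" for x
    using assms(1) that by (rule max_shift_prob_student_scaled_tendsto)
qed (use frechet_quantile_crossing[OF assms] in auto)

end
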